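(* Let $\alpha>0$, $A>0$ and $a\ge1$. Then for all $\lambda>0$, \[ \#\{k\ge1:\lambda_k(R^A_a,\alpha)\le\lambda\}\le\frac{\lambda A}{\pi^2}+\frac{(\lambda A)^{1/2}}{\pi}\Big(a+\frac1a\Big)+1. \]
   Context: For a bounded open set $\Omega\subset\mathbb{R}^2$ with Lipschitz boundary and $\alpha>0$, $\lambda_1(\Omega,\alpha)\le\lambda_2(\Omega,\alpha)\le\cdots$ denote the eigenvalues, counted with multiplicity, of the Robin Laplacian $-\Delta u=\lambda u$, $\partial_\nu u+\alpha u=0$ on $\partial\Omega$ (defined via the form $\int_\Omega\nabla u\cdot\overline{\nabla v}+\alpha\int_{\partial\Omega}u\overline v$ on $H^1(\Omega)$). $R^A_a$ is a rectangle with side lengths $A^{1/2}a$ and $A^{1/2}/a$. *)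

theory Defs
  imports "HOL-Analysis.Analysis"
begin

text \<open>Closed rectangle with side lengths l1, l2 (position is irrelevant).\<close>
definition rect :: "real \<Rightarrow> real \<Rightarrow> (real \<times> real) set" where
  "rect l1 l2 = {0..l1} \<times> {0..l2}"

text \<open>Restrictions of C^1 functions on the plane: a dense core of H^1 of the rectangle.\<close>
definition C1_fun :: "(real \<times> real \<Rightarrow> real) \<Rightarrow> bool" where
  "C1_fun u \<longleftrightarrow> (\<exists>gx gy. continuous_on UNIV gx \<and> continuous_on UNIV gy \<and>
     (\<forall>x. (u has_derivative (\<lambda>h. gx x * fst h + gy x * snd h)) (at x)))"

definition grad_sq :: "(real \<times> real \<Rightarrow> real) \<Rightarrow> real \<times> real \<Rightarrow> real" where
  "grad_sq u x = (frechet_derivative u (at x) (1,0))\<^sup>2 + (frechet_derivative u (at x) (0,1))\<^sup>2"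

definition robin_form :: "real \<Rightarrow> real \<Rightarrow> real \<Rightarrow> (real \<times> real \<Rightarrow> real) \<Rightarrow> real" where
  "robin_form l1 l2 \<alpha> u =
     integral (rect l1 l2) (grad_sq u)
     + \<alpha> * (integral {0..l1} (\<lambda>t. (u (t,0))\<^sup>2 + (u (t,l2))\<^sup>2)
            + integral {0..l2} (\<lambda>t. (u (0,t))\<^sup>2 + (u (l1,t))\<^sup>2))"

definition l2sq :: "real \<Rightarrow> real \<Rightarrow> (real \<times> real \<Rightarrow> real) \<Rightarrow> real" where
  "l2sq l1 l2 u = integral (rect l1 l2) (\<lambda>x. (u x)\<^sup>2)"

text \<open>k-th Robin eigenvalue (counted with multiplicity) via the Courant--Fischer min-max
  principle for the Robin form, the k-dimensional trial spaces being spanned by k functions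
  of the core that are linearly independent on the rectangle.\<close>
definition robin_eig :: "real \<Rightarrow> real \<Rightarrow> real \<Rightarrow> nat \<Rightarrow> real" where
  "robin_eig l1 l2 \<alpha> k =
     Inf { Sup { robin_form l1 l2 \<alpha> (\<lambda>x. \<Sum>i<k. c i * f i x)
                   / l2sq l1 l2 (\<lambda>x. \<Sum>i<k. c i * f i x)
               | c. \<exists>x\<in>rect l1 l2. (\<Sum>i<k. c i * f i x) \<noteq> 0 }
         | f. (\<forall>i<k. C1_fun (f i)) \<and>
              (\<forall>c. (\<forall>x\<in>rect l1 l2. (\<Sum>i<k. c i * f i x) = 0) \<longrightarrow> (\<forall>i<k. c i = 0)) }"

end

theory Submission
  imports Defs
begin

text \<open>Cut the rectangle \<open>L\<^sub>1 \<times> L\<^sub>2\<close> into \<open>p \<times> q\<close> congruent cells of sides \<open>w = L\<^sub>1 / p\<close>,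
  \<open>h = L\<^sub>2 / q\<close>, where \<open>p, q\<close> are the least integers with \<open>sqrt \<lambda> w < pi\<close> and \<open>sqrt \<lambda> h < pi\<close>;
  thus \<open>p q \<le> (L\<^sub>1 sqrt \<lambda> / pi + 1) (L\<^sub>2 sqrt \<lambda> / pi + 1)\<close>, which for \<open>L\<^sub>1 = sqrt A a\<close>,
  \<open>L\<^sub>2 = sqrt A / a\<close> is the claimed bound. In any trial space of dimension \<open>n > p q\<close> some
  nonzero function has mean zero on every cell. On each cell the Neumann Poincare inequality
  (the first nonzero Neumann eigenvalue of a \<open>w \<times> h\<close> rectangle is \<open>pi\<^sup>2 / max w h\<^sup>2 > \<lambda>\<close>)
  bounds its \<open>L\<^sup>2\<close> norm by its Dirichlet energy, and the Robin boundary term is nonnegative.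
  So every such trial space contains a Rayleigh quotient \<open>> \<lambda>\<close>, i.e. \<open>\<lambda>\<^sub>n > \<lambda>\<close> for \<open>n > p q\<close>.
  The rectangle inequality is reduced to the interval, slice by slice, and the Neumann interval
  inequality to the Dirichlet one by passing to the antiderivative.\<close>

section \<open>Poincare inequalities on an interval\<close>

lemma riccati_tan:
  fixes k c x :: real
  assumes "cos (k * (x - c)) \<noteq> 0"
  shows "((\<lambda>x. - k * tan (k * (x - c))) has_real_derivative
           - (k\<^sup>2) - (k * tan (k * (x - c)))\<^sup>2) (at x)"
proof -
  have "((\<lambda>x. - k * tan (k * (x - c))) has_real_derivative
           - k * (inverse (cos (k * (x - c))))\<^sup>2 * k) (at x)"
    using assms by (auto intro!: derivative_eq_intros DERIV_chain2[where f=tan] simp: power_inverse)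
  moreover have "- k * (inverse (cos (k * (x - c))))\<^sup>2 * k = - (k\<^sup>2) - (k * tan (k * (x - c)))\<^sup>2"
    unfolding tan_sec[OF assms, symmetric] by (simp add: power_mult_distrib power2_eq_square algebra_simps)
  ultimately show ?thesis
    by simp
qed

lemma cos_pos_interval:
  fixes k a b x :: real
  assumes k: "0 < k" "k * (b - a) < pi" and x: "x \<in> {a..b}"
  shows "cos (k * (x - (a + b) / 2)) > 0"
proof -
  have "\<bar>x - (a + b) / 2\<bar> \<le> (b - a) / 2"
    using x unfolding abs_le_iff by (simp add: field_simps)
  then have "k * \<bar>x - (a + b) / 2\<bar> \<le> k * ((b - a) / 2)"
    using k by (intro mult_left_mono) auto
  then have "\<bar>k * (x - (a + b) / 2)\<bar> < pi / 2"
    using k by (simp only: abs_mult abs_of_pos[OF k(1)])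
  then show ?thesis
    unfolding abs_less_iff by (intro cos_gt_zero_pi) linarith+
qed

text \<open>The Riccati function \<open>\<phi> = - k tan (k (x - (a + b) / 2))\<close> satisfies \<open>\<phi>' + \<phi>\<^sup>2 = - k\<^sup>2\<close>
  on \<open>[a, b]\<close>, so that \<open>F\<^sup>2 - k\<^sup>2 G\<^sup>2 = (F - \<phi> G)\<^sup>2 + (\<phi> G\<^sup>2)'\<close>; the last term integrates to zero.\<close>

lemma poincare_dirichlet_interval:
  fixes G F :: "real \<Rightarrow> real"
  assumes ab: "a < b" and k: "0 < k" "k * (b - a) < pi"
    and G': "\<And>x. x \<in> {a..b} \<Longrightarrow> (G has_real_derivative F x) (at x within {a..b})"
    and F: "continuous_on {a..b} F"
    and "G a = 0" "G b = 0"
  shows "k\<^sup>2 * integral {a..b} (\<lambda>x. (G x)\<^sup>2) \<le> integral {a..b} (\<lambda>x. (F x)\<^sup>2)"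
proof -
  define \<phi> where "\<phi> = (\<lambda>x. - k * tan (k * (x - (a + b) / 2)))"
  have \<phi>': "(\<phi> has_real_derivative - (k\<^sup>2) - (\<phi> x)\<^sup>2) (at x within {a..b})" if "x \<in> {a..b}" for x
  proof -
    have "cos (k * (x - (a + b) / 2)) \<noteq> 0"
      using cos_pos_interval[OF k that] by simp
    from riccati_tan[OF this] have "(\<phi> has_real_derivative - (k\<^sup>2) - (\<phi> x)\<^sup>2) (at x)"
      by (simp add: \<phi>_def)
    then show ?thesis
      by (rule has_field_derivative_at_within)
  qed
  have cG: "continuous_on {a..b} G"
    using G' by (meson DERIV_continuous continuous_on_eq_continuous_within)
  define h' where "h' x = (- (k\<^sup>2) - (\<phi> x)\<^sup>2) * (G x)\<^sup>2 + \<phi> x * (2 * G x * F x)" for x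
  have "((\<lambda>x. \<phi> x * (G x)\<^sup>2) has_vector_derivative h' x) (at x within {a..b})"
    if "x \<in> {a..b}" for x
    unfolding has_real_derivative_iff_has_vector_derivative[symmetric] h'_def
    using \<phi>'[OF that] G'[OF that] by (auto intro!: derivative_eq_intros simp: algebra_simps)
  then have "(h' has_integral 0) {a..b}"
    using fundamental_theorem_of_calculus[of a b "\<lambda>x. \<phi> x * (G x)\<^sup>2" h'] ab \<open>G a = 0\<close> \<open>G b = 0\<close>
    by auto
  moreover have "((\<lambda>x. (F x)\<^sup>2) has_integral integral {a..b} (\<lambda>x. (F x)\<^sup>2)) {a..b}"
    "((\<lambda>x. (G x)\<^sup>2) has_integral integral {a..b} (\<lambda>x. (G x)\<^sup>2)) {a..b}"
    by (intro integrable_integral integrable_continuous_interval continuous_intros cG F)+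
  ultimately have "((\<lambda>x. (F x)\<^sup>2 - h' x - k\<^sup>2 * (G x)\<^sup>2) has_integral
      integral {a..b} (\<lambda>x. (F x)\<^sup>2) - 0 - k\<^sup>2 * integral {a..b} (\<lambda>x. (G x)\<^sup>2)) {a..b}"
    by (intro has_integral_diff has_integral_mult_right)
  then have "((\<lambda>x. (F x - \<phi> x * G x)\<^sup>2) has_integral
      integral {a..b} (\<lambda>x. (F x)\<^sup>2) - 0 - k\<^sup>2 * integral {a..b} (\<lambda>x. (G x)\<^sup>2)) {a..b}"
    by (rule has_integral_eq[rotated]) (simp add: h'_def algebra_simps power2_eq_square)
  then have "0 \<le> integral {a..b} (\<lambda>x. (F x)\<^sup>2) - 0 - k\<^sup>2 * integral {a..b} (\<lambda>x. (G x)\<^sup>2)"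
    by (rule has_integral_nonneg) simp
  then show ?thesis by simp
qed

lemma integral_sq_sub_mean:
  fixes g :: "real \<Rightarrow> real"
  assumes ab: "a < b" and g: "continuous_on {a..b} g"
  shows "integral {a..b} (\<lambda>x. (g x - integral {a..b} g / (b - a))\<^sup>2)
           = integral {a..b} (\<lambda>x. (g x)\<^sup>2) - (integral {a..b} g)\<^sup>2 / (b - a)"
proof -
  define c where "c = integral {a..b} g / (b - a)"
  have "(g has_integral integral {a..b} g) {a..b}"
    "((\<lambda>x. (g x)\<^sup>2) has_integral integral {a..b} (\<lambda>x. (g x)\<^sup>2)) {a..b}"
    by (intro integrable_integral integrable_continuous_interval continuous_intros g)+
  then have "((\<lambda>x. (g x)\<^sup>2 - (2 * c) * g x + c\<^sup>2) has_integral
      integral {a..b} (\<lambda>x. (g x)\<^sup>2) - (2 * c) * integral {a..b} g + (b - a) * c\<^sup>2) {a..b}"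
    using has_integral_const_real[of "c\<^sup>2" a b] ab
    by (auto intro!: has_integral_add has_integral_diff has_integral_mult_right)
  then have "((\<lambda>x. (g x - c)\<^sup>2) has_integral
      integral {a..b} (\<lambda>x. (g x)\<^sup>2) - (2 * c) * integral {a..b} g + (b - a) * c\<^sup>2) {a..b}"
    by (rule has_integral_eq[rotated]) (simp add: power2_eq_square algebra_simps)
  then have "integral {a..b} (\<lambda>x. (g x - c)\<^sup>2)
      = integral {a..b} (\<lambda>x. (g x)\<^sup>2) - (2 * c) * integral {a..b} g + (b - a) * c\<^sup>2"
    by (rule integral_unique)
  also have "\<dots> = integral {a..b} (\<lambda>x. (g x)\<^sup>2) - (integral {a..b} g)\<^sup>2 / (b - a)"
  proof -
    have "X - (2 * (J / d)) * J + d * (J / d)\<^sup>2 = X - J\<^sup>2 / d" if "d \<noteq> 0" for X J d :: real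
      using that by (simp add: field_simps power2_eq_square)
    then show ?thesis
      using ab unfolding c_def by simp
  qed
  finally show ?thesis unfolding c_def .
qed

lemma has_integral_antiderivative_mult:
  fixes f f' :: "real \<Rightarrow> real"
  assumes ab: "a \<le> b"
    and f': "\<And>x. x \<in> {a..b} \<Longrightarrow> (f has_real_derivative f' x) (at x within {a..b})"
    and mean: "integral {a..b} f = 0"
  shows "((\<lambda>x. integral {a..x} f * f' x) has_integral - integral {a..b} (\<lambda>x. (f x)\<^sup>2)) {a..b}"
proof -
  have cf: "continuous_on {a..b} f"
    using f' by (meson DERIV_continuous continuous_on_eq_continuous_within)
  define G where "G x = integral {a..x} f" for x
  have G': "(G has_real_derivative f x) (at x within {a..b})" if "x \<in> {a..b}" for x
    unfolding has_real_derivative_iff_has_vector_derivative G_def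
    by (rule integral_has_vector_derivative[OF cf that])
  have "((\<lambda>x. f x * f x + G x * f' x) has_integral G b * f b - G a * f a) {a..b}"
  proof (rule fundamental_theorem_of_calculus[OF ab])
    fix x assume x: "x \<in> {a..b}"
    show "((\<lambda>x. G x * f x) has_vector_derivative f x * f x + G x * f' x) (at x within {a..b})"
      unfolding has_real_derivative_iff_has_vector_derivative[symmetric]
      using G'[OF x] f'[OF x] by (auto intro!: derivative_eq_intros simp: algebra_simps)
  qed
  moreover have "G a = 0" "G b = 0"
    using mean by (simp_all add: G_def)
  moreover have "((\<lambda>x. (f x)\<^sup>2) has_integral integral {a..b} (\<lambda>x. (f x)\<^sup>2)) {a..b}"
    by (intro integrable_integral integrable_continuous_interval continuous_intros cf)
  ultimately have "((\<lambda>x. (f x * f x + G x * f' x) - (f x)\<^sup>2) has_integral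
      0 - integral {a..b} (\<lambda>x. (f x)\<^sup>2)) {a..b}"
    by (intro has_integral_diff) auto
  then show ?thesis
    by (simp add: G_def power2_eq_square)
qed

lemma poincare_mean_zero_interval:
  fixes f f' :: "real \<Rightarrow> real"
  assumes ab: "a < b" and k: "0 < k" "k * (b - a) < pi"
    and f': "\<And>x. x \<in> {a..b} \<Longrightarrow> (f has_real_derivative f' x) (at x within {a..b})"
    and cf': "continuous_on {a..b} f'"
    and mean: "integral {a..b} f = 0"
  shows "k\<^sup>2 * integral {a..b} (\<lambda>x. (f x)\<^sup>2) \<le> integral {a..b} (\<lambda>x. (f' x)\<^sup>2)"
proof -
  have cf: "continuous_on {a..b} f"
    using f' by (meson DERIV_continuous continuous_on_eq_continuous_within)
  define G where "G x = integral {a..x} f" for x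
  have G': "(G has_real_derivative f x) (at x within {a..b})" if "x \<in> {a..b}" for x
    unfolding has_real_derivative_iff_has_vector_derivative G_def
    by (rule integral_has_vector_derivative[OF cf that])
  have cG: "continuous_on {a..b} G"
    using G' by (meson DERIV_continuous continuous_on_eq_continuous_within)
  have "G a = 0" "G b = 0"
    using mean by (simp_all add: G_def)
  then have dirichlet: "k\<^sup>2 * integral {a..b} (\<lambda>x. (G x)\<^sup>2) \<le> integral {a..b} (\<lambda>x. (f x)\<^sup>2)"
    by (intro poincare_dirichlet_interval[OF ab k G' cf])
  have "((\<lambda>x. G x * f' x) has_integral - integral {a..b} (\<lambda>x. (f x)\<^sup>2)) {a..b}"
    unfolding G_def using ab f' mean by (intro has_integral_antiderivative_mult) auto
  moreover have "((\<lambda>x. (G x)\<^sup>2) has_integral integral {a..b} (\<lambda>x. (G x)\<^sup>2)) {a..b}"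
    "((\<lambda>x. (f' x)\<^sup>2) has_integral integral {a..b} (\<lambda>x. (f' x)\<^sup>2)) {a..b}"
    by (intro integrable_integral integrable_continuous_interval continuous_intros cG cf')+
  \<comment> \<open>AM-GM: \<open>- G f' \<le> (k\<^sup>2 G\<^sup>2 + f'\<^sup>2 / k\<^sup>2) / 2\<close>\<close>
  ultimately have "((\<lambda>x. (k\<^sup>2 * (G x)\<^sup>2 + (f' x)\<^sup>2 / k\<^sup>2) / 2 + G x * f' x) has_integral
      (k\<^sup>2 * integral {a..b} (\<lambda>x. (G x)\<^sup>2) + integral {a..b} (\<lambda>x. (f' x)\<^sup>2) / k\<^sup>2) / 2
       + - integral {a..b} (\<lambda>x. (f x)\<^sup>2)) {a..b}"
    by (intro has_integral_add has_integral_divide has_integral_mult_right)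
  then have "0 \<le> (k\<^sup>2 * integral {a..b} (\<lambda>x. (G x)\<^sup>2) + integral {a..b} (\<lambda>x. (f' x)\<^sup>2) / k\<^sup>2) / 2
       + - integral {a..b} (\<lambda>x. (f x)\<^sup>2)"
  proof (rule has_integral_nonneg)
    fix x
    have sq: "(k\<^sup>2 * (G x)\<^sup>2 + (f' x)\<^sup>2 / k\<^sup>2) / 2 + G x * f' x = (k * G x + f' x / k)\<^sup>2 / 2"
      using k by (simp add: power2_eq_square field_simps)
    show "0 \<le> (k\<^sup>2 * (G x)\<^sup>2 + (f' x)\<^sup>2 / k\<^sup>2) / 2 + G x * f' x"
      unfolding sq by simp
  qed
  with dirichlet have "integral {a..b} (\<lambda>x. (f x)\<^sup>2) \<le> integral {a..b} (\<lambda>x. (f' x)\<^sup>2) / k\<^sup>2"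
    by simp
  then have "k\<^sup>2 * integral {a..b} (\<lambda>x. (f x)\<^sup>2) \<le> k\<^sup>2 * (integral {a..b} (\<lambda>x. (f' x)\<^sup>2) / k\<^sup>2)"
    by (rule mult_left_mono) simp
  also have "\<dots> = integral {a..b} (\<lambda>x. (f' x)\<^sup>2)"
    using k by simp
  finally show ?thesis .
qed

lemma poincare_neumann_interval:
  fixes g g' :: "real \<Rightarrow> real"
  assumes ab: "a < b" and k: "0 < k" "k * (b - a) < pi"
    and g': "\<And>x. x \<in> {a..b} \<Longrightarrow> (g has_real_derivative g' x) (at x within {a..b})"
    and cg': "continuous_on {a..b} g'"
  shows "k\<^sup>2 * (integral {a..b} (\<lambda>x. (g x)\<^sup>2) - (integral {a..b} g)\<^sup>2 / (b - a))
           \<le> integral {a..b} (\<lambda>x. (g' x)\<^sup>2)"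
proof -
  have cg: "continuous_on {a..b} g"
    using g' by (meson DERIV_continuous continuous_on_eq_continuous_within)
  define c where "c = integral {a..b} g / (b - a)"
  have "((\<lambda>x. g x - c) has_integral integral {a..b} g - c * (b - a)) {a..b}"
    using has_integral_diff[OF integrable_integral[OF integrable_continuous_interval[OF cg]]
        has_integral_const_real[of c a b]] ab
    by (simp add: mult.commute)
  then have "integral {a..b} (\<lambda>x. g x - c) = 0"
    using ab by (simp add: c_def integral_unique)
  moreover have "((\<lambda>x. g x - c) has_real_derivative g' x) (at x within {a..b})" if "x \<in> {a..b}" for x
    using g'[OF that] by (auto intro!: derivative_eq_intros)
  ultimately have "k\<^sup>2 * integral {a..b} (\<lambda>x. (g x - c)\<^sup>2) \<le> integral {a..b} (\<lambda>x. (g' x)\<^sup>2)"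
    by (intro poincare_mean_zero_interval[OF ab k _ cg'])
  then show ?thesis
    by (simp only: c_def integral_sq_sub_mean[OF ab cg])
qed

lemma discriminant_le_of_nonneg:
  fixes A B C :: real
  assumes nonneg: "\<And>t. 0 \<le> A - 2 * t * B + t\<^sup>2 * C" and "C \<ge> 0"
  shows "B\<^sup>2 \<le> A * C"
proof (cases "C = 0")
  case True
  have "B = 0"
  proof (rule ccontr)
    assume "B \<noteq> 0"
    have "0 \<le> A - 2 * ((A + 1) / (2 * B)) * B + ((A + 1) / (2 * B))\<^sup>2 * C"
      by (rule nonneg)
    also have "\<dots> = -1"
      using \<open>B \<noteq> 0\<close> True by (simp add: field_simps)
    finally show False by simp
  qed
  with True show ?thesis by simp
next
  case False
  with \<open>C \<ge> 0\<close> have "C > 0" by simp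
  have "0 \<le> A - 2 * (B / C) * B + (B / C)\<^sup>2 * C"
    by (rule nonneg)
  also have "\<dots> = (A * C - B\<^sup>2) / C"
    using \<open>C > 0\<close> by (simp add: field_simps power2_eq_square)
  finally show ?thesis
    using \<open>C > 0\<close> by (simp add: zero_le_divide_iff)
qed

lemma Cauchy_Schwarz_integral:
  fixes U V :: "'a::euclidean_space \<Rightarrow> real"
  assumes U: "continuous_on (cbox a b) U" and V: "continuous_on (cbox a b) V"
  shows "(integral (cbox a b) (\<lambda>x. U x * V x))\<^sup>2
           \<le> integral (cbox a b) (\<lambda>x. (U x)\<^sup>2) * integral (cbox a b) (\<lambda>x. (V x)\<^sup>2)"
proof (rule discriminant_le_of_nonneg)
  let ?A = "integral (cbox a b) (\<lambda>x. (U x)\<^sup>2)"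
  let ?B = "integral (cbox a b) (\<lambda>x. U x * V x)"
  let ?C = "integral (cbox a b) (\<lambda>x. (V x)\<^sup>2)"
  have I: "((\<lambda>x. (U x)\<^sup>2) has_integral ?A) (cbox a b)" "((\<lambda>x. U x * V x) has_integral ?B) (cbox a b)"
    "((\<lambda>x. (V x)\<^sup>2) has_integral ?C) (cbox a b)"
    by (intro integrable_integral integrable_continuous continuous_intros U V)+
  fix t
  have "((\<lambda>x. (U x)\<^sup>2 - (2 * t) * (U x * V x) + t\<^sup>2 * (V x)\<^sup>2) has_integral
      ?A - (2 * t) * ?B + t\<^sup>2 * ?C) (cbox a b)"
    by (intro has_integral_add has_integral_diff has_integral_mult_right I)
  then have "((\<lambda>x. (U x - t * V x)\<^sup>2) has_integral ?A - (2 * t) * ?B + t\<^sup>2 * ?C) (cbox a b)"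
    by (rule has_integral_eq[rotated]) (simp add: power2_eq_square algebra_simps)
  then show "0 \<le> ?A - 2 * t * ?B + t\<^sup>2 * ?C"
    by (rule has_integral_nonneg) simp
  show "0 \<le> ?C"
    by (rule has_integral_nonneg[OF I(3)]) simp
qed

definition partial1 :: "(real \<times> real \<Rightarrow> real) \<Rightarrow> real \<times> real \<Rightarrow> real" where
  "partial1 u z = frechet_derivative u (at z) (1, 0)"

definition partial2 :: "(real \<times> real \<Rightarrow> real) \<Rightarrow> real \<times> real \<Rightarrow> real" where
  "partial2 u z = frechet_derivative u (at z) (0, 1)"

lemma grad_sq_eq_partials: "grad_sq u z = (partial1 u z)\<^sup>2 + (partial2 u z)\<^sup>2"
  by (simp add: grad_sq_def partial1_def partial2_def)

lemma partials_of_has_derivative: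
  assumes "(u has_derivative (\<lambda>h. gx * fst h + gy * snd h)) (at z)"
  shows "partial1 u z = gx" "partial2 u z = gy"
  using frechet_derivative_at[OF assms, symmetric] by (simp_all add: partial1_def partial2_def)

lemma C1_funD:
  assumes "C1_fun u"
  shows "(u has_derivative (\<lambda>h. partial1 u z * fst h + partial2 u z * snd h)) (at z)"
    and "continuous_on UNIV (partial1 u)" and "continuous_on UNIV (partial2 u)"
proof -
  obtain gx gy where "continuous_on UNIV gx" "continuous_on UNIV gy"
    and D: "\<And>z. (u has_derivative (\<lambda>h. gx z * fst h + gy z * snd h)) (at z)"
    using assms unfolding C1_fun_def by blast
  moreover have "partial1 u = gx" "partial2 u = gy"
    using partials_of_has_derivative[OF D] by auto
  ultimately show "(u has_derivative (\<lambda>h. partial1 u z * fst h + partial2 u z * snd h)) (at z)"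
    "continuous_on UNIV (partial1 u)" "continuous_on UNIV (partial2 u)"
    by simp_all
qed

lemma C1_fun_continuous:
  assumes "C1_fun u"
  shows "continuous_on UNIV u"
  using C1_funD(1)[OF assms] has_derivative_continuous continuous_at_imp_continuous_on by blast

lemma has_derivative_lincomb:
  fixes f gx gy :: "nat \<Rightarrow> real \<times> real \<Rightarrow> real"
  assumes "\<And>i. i < n \<Longrightarrow> (f i has_derivative (\<lambda>h. gx i z * fst h + gy i z * snd h)) (at z)"
  shows "((\<lambda>x. \<Sum>i<n. c i * f i x) has_derivative
          (\<lambda>h. (\<Sum>i<n. c i * gx i z) * fst h + (\<Sum>i<n. c i * gy i z) * snd h)) (at z)"
proof -
  have "((\<lambda>x. \<Sum>i<n. c i * f i x) has_derivative
          (\<lambda>h. \<Sum>i<n. c i * (gx i z * fst h + gy i z * snd h))) (at z)"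
    using assms by (intro has_derivative_sum has_derivative_mult_right) simp
  moreover have "(\<lambda>h. \<Sum>i<n. c i * (gx i z * fst h + gy i z * snd h)) =
     (\<lambda>h. (\<Sum>i<n. c i * gx i z) * fst h + (\<Sum>i<n. c i * gy i z) * snd h)"
    by (simp add: distrib_left sum.distrib sum_distrib_right mult.assoc)
  ultimately show ?thesis
    by simp
qed

lemma
  fixes f :: "nat \<Rightarrow> real \<times> real \<Rightarrow> real"
  assumes "\<And>i. i < n \<Longrightarrow> C1_fun (f i)"
  shows C1_fun_lincomb: "C1_fun (\<lambda>z. \<Sum>i<n. c i * f i z)"
    and partial1_lincomb: "partial1 (\<lambda>z. \<Sum>i<n. c i * f i z) z = (\<Sum>i<n. c i * partial1 (f i) z)"
    and partial2_lincomb: "partial2 (\<lambda>z. \<Sum>i<n. c i * f i z) z = (\<Sum>i<n. c i * partial2 (f i) z)"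
proof -
  have D: "((\<lambda>x. \<Sum>i<n. c i * f i x) has_derivative
      (\<lambda>h. (\<Sum>i<n. c i * partial1 (f i) z) * fst h + (\<Sum>i<n. c i * partial2 (f i) z) * snd h)) (at z)"
    for z
    by (rule has_derivative_lincomb[where gx="\<lambda>i. partial1 (f i)" and gy="\<lambda>i. partial2 (f i)"])
      (rule C1_funD(1)[OF assms])
  then show "partial1 (\<lambda>z. \<Sum>i<n. c i * f i z) z = (\<Sum>i<n. c i * partial1 (f i) z)"
    "partial2 (\<lambda>z. \<Sum>i<n. c i * f i z) z = (\<Sum>i<n. c i * partial2 (f i) z)"
    by (rule partials_of_has_derivative)+
  have "continuous_on UNIV (\<lambda>z. \<Sum>i<n. c i * partial1 (f i) z)"
    "continuous_on UNIV (\<lambda>z. \<Sum>i<n. c i * partial2 (f i) z)"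
    using C1_funD(2,3)[OF assms] by (auto intro!: continuous_intros)
  with D show "C1_fun (\<lambda>z. \<Sum>i<n. c i * f i z)"
    unfolding C1_fun_def by blast
qed

section \<open>Poincare inequality on a grid of rectangles\<close>

lemma integral_rectangle_iterated:
  fixes F :: "real \<times> real \<Rightarrow> real"
  assumes "continuous_on (cbox (x0, y0) (x1, y1)) F"
  shows "integral (cbox (x0, y0) (x1, y1)) F = integral {y0..y1} (\<lambda>y. integral {x0..x1} (\<lambda>x. F (x, y)))"
proof -
  have "integral (cbox (x0, y0) (x1, y1)) F = integral (cbox x0 x1) (\<lambda>x. integral (cbox y0 y1) (\<lambda>y. F (x, y)))"
    by (rule integral_prod_continuous[OF assms])
  also have "\<dots> = integral (cbox y0 y1) (\<lambda>y. integral (cbox x0 x1) (\<lambda>x. F (x, y)))"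
    using integral_swap_continuous[where f="\<lambda>x y. F (x, y)"] assms by simp
  finally show ?thesis
    by (simp add: cbox_interval)
qed

lemma continuous_on_integral_slice:
  fixes F :: "real \<times> real \<Rightarrow> real"
  assumes "continuous_on UNIV F"
  shows "continuous_on S (\<lambda>y. integral {x0..x1} (\<lambda>x. F (x, y)))"
proof -
  have "continuous_on (S \<times> cbox x0 x1) (\<lambda>(y, x). F (x, y))"
    by (auto intro!: continuous_on_compose2[OF assms] continuous_intros simp: case_prod_unfold)
  from integral_continuous_on_param[OF this] show ?thesis
    by (simp add: cbox_interval)
qed

lemma
  assumes "(u has_derivative (\<lambda>h. gx * fst h + gy * snd h)) (at (x, y))"
  shows has_real_derivative_slice1: "((\<lambda>t. u (t, y)) has_real_derivative gx) (at x within S)"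
    and has_real_derivative_slice2: "((\<lambda>t. u (x, t)) has_real_derivative gy) (at y within S)"
proof -
  have "((\<lambda>t. (t, y)) has_derivative (\<lambda>t. (t, 0))) (at x within S)"
    "((\<lambda>t. (x, t)) has_derivative (\<lambda>t. (0, t))) (at y within S)"
    by (auto intro!: derivative_eq_intros)
  from this[THEN has_derivative_compose, OF assms]
  show "((\<lambda>t. u (t, y)) has_real_derivative gx) (at x within S)"
    "((\<lambda>t. u (x, t)) has_real_derivative gy) (at y within S)"
    by (simp_all add: has_field_derivative_def mult_commute_abs)
qed

lemma has_real_derivative_integral_slice:
  assumes u: "C1_fun u" and y: "y \<in> {y0..y1}"
  shows "((\<lambda>y. integral {x0..x1} (\<lambda>x. u (x, y))) has_real_derivative
           integral {x0..x1} (\<lambda>x. partial2 u (x, y))) (at y within {y0..y1})"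
proof -
  have "continuous_on ({y0..y1} \<times> cbox x0 x1) (\<lambda>(y, x). partial2 u (x, y))"
    by (auto intro!: continuous_on_compose2[OF C1_funD(3)[OF u]] continuous_intros
        simp: case_prod_unfold)
  moreover have "(\<lambda>x. u (x, y)) integrable_on {x0..x1}" for y
    by (auto intro!: integrable_continuous_interval continuous_on_compose2[OF C1_fun_continuous[OF u]]
        continuous_intros)
  ultimately have "((\<lambda>y. integral (cbox x0 x1) (\<lambda>x. u (x, y))) has_real_derivative
      integral (cbox x0 x1) (\<lambda>x. partial2 u (x, y))) (at y within {y0..y1})"
    using y by (intro leibniz_rule_field_derivative has_real_derivative_slice2[OF C1_funD(1)[OF u]])
      (auto simp: cbox_interval)
  then show ?thesis
    by (simp add: cbox_interval)
qed

lemma poincare_slice_means: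
  assumes u: "C1_fun u" and x01: "x0 < x1" and y01: "y0 < y1"
    and k: "0 < k" "k * (y1 - y0) < pi"
    and mean: "integral (cbox (x0, y0) (x1, y1)) u = 0"
  shows "k\<^sup>2 * integral {y0..y1} (\<lambda>y. (integral {x0..x1} (\<lambda>x. u (x, y)))\<^sup>2)
           \<le> (x1 - x0) * integral (cbox (x0, y0) (x1, y1)) (\<lambda>z. (partial2 u z)\<^sup>2)"
proof -
  have cu: "continuous_on UNIV u" and c2: "continuous_on UNIV (partial2 u)"
    using C1_fun_continuous[OF u] C1_funD(3)[OF u] .
  define m where "m y = integral {x0..x1} (\<lambda>x. u (x, y))" for y
  define m' where "m' y = integral {x0..x1} (\<lambda>x. partial2 u (x, y))" for y
  define R where "R y = integral {x0..x1} (\<lambda>x. (partial2 u (x, y))\<^sup>2)" for y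
  have cont: "continuous_on S m'" "continuous_on S R" for S
    unfolding m'_def R_def
    using continuous_on_integral_slice[OF c2] continuous_on_integral_slice[OF continuous_on_power[OF c2]]
    by auto
  have "integral {y0..y1} m = 0"
    using mean integral_rectangle_iterated[of x0 y0 x1 y1 u] continuous_on_subset[OF cu]
    by (simp add: m_def[abs_def])
  moreover have "(m has_real_derivative m' y) (at y within {y0..y1})" if "y \<in> {y0..y1}" for y
    unfolding m_def m'_def by (rule has_real_derivative_integral_slice[OF u that])
  ultimately have "k\<^sup>2 * integral {y0..y1} (\<lambda>y. (m y)\<^sup>2) \<le> integral {y0..y1} (\<lambda>y. (m' y)\<^sup>2)"
    using poincare_mean_zero_interval[OF y01 k _ cont(1)] by blast
  also have "\<dots> \<le> integral {y0..y1} (\<lambda>y. (x1 - x0) * R y)"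
  proof (rule integral_le)
    fix y
    have "(integral (cbox x0 x1) (\<lambda>x. partial2 u (x, y) * 1))\<^sup>2
        \<le> integral (cbox x0 x1) (\<lambda>x. (partial2 u (x, y))\<^sup>2) * integral (cbox x0 x1) (\<lambda>x. 1\<^sup>2)"
      by (rule Cauchy_Schwarz_integral) (auto intro!: continuous_on_compose2[OF c2] continuous_intros)
    then show "(m' y)\<^sup>2 \<le> (x1 - x0) * R y"
      using x01 by (simp add: m'_def R_def cbox_interval mult.commute)
  qed (auto intro!: integrable_continuous_interval continuous_intros cont)
  also have "\<dots> = (x1 - x0) * integral (cbox (x0, y0) (x1, y1)) (\<lambda>z. (partial2 u z)\<^sup>2)"
    unfolding R_def
    by (simp add: integral_rectangle_iterated continuous_on_subset[OF continuous_on_power[OF c2]])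
  finally show ?thesis
    unfolding m_def .
qed

lemma poincare_neumann_rectangle:
  assumes u: "C1_fun u" and x01: "x0 < x1" and y01: "y0 < y1"
    and k: "0 < k" "k * (x1 - x0) < pi" "k * (y1 - y0) < pi"
    and mean: "integral (cbox (x0, y0) (x1, y1)) u = 0"
  shows "k\<^sup>2 * integral (cbox (x0, y0) (x1, y1)) (\<lambda>z. (u z)\<^sup>2)
           \<le> integral (cbox (x0, y0) (x1, y1)) (grad_sq u)"
proof -
  define w where "w = x1 - x0"
  have "w > 0"
    using x01 by (simp add: w_def)
  have cu: "continuous_on UNIV u" and c1: "continuous_on UNIV (partial1 u)"
    and c2: "continuous_on UNIV (partial2 u)"
    using C1_fun_continuous[OF u] C1_funD(2,3)[OF u] .
  define m where "m y = integral {x0..x1} (\<lambda>x. u (x, y))" for y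
  define P where "P y = integral {x0..x1} (\<lambda>x. (u (x, y))\<^sup>2)" for y
  define Q where "Q y = integral {x0..x1} (\<lambda>x. (partial1 u (x, y))\<^sup>2)" for y
  have cont: "continuous_on S m" "continuous_on S P" "continuous_on S Q" for S
    unfolding m_def P_def Q_def
    using continuous_on_integral_slice[OF cu]
      continuous_on_integral_slice[OF continuous_on_power[OF cu]]
      continuous_on_integral_slice[OF continuous_on_power[OF c1]]
    by auto
  have int: "f integrable_on {y0..y1}" if "continuous_on UNIV f" for f :: "real \<Rightarrow> real"
    by (rule integrable_continuous_interval, rule continuous_on_subset[OF that]) simp
  have along_x: "k\<^sup>2 * P y \<le> k\<^sup>2 / w * (m y)\<^sup>2 + Q y" for y
  proof -
    have "k\<^sup>2 * (P y - (m y)\<^sup>2 / w) \<le> Q y"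
      unfolding P_def m_def Q_def w_def
      by (rule poincare_neumann_interval[OF x01 k(1,2)])
        (auto intro!: has_real_derivative_slice1[OF C1_funD(1)[OF u]]
          continuous_on_compose2[OF c1] continuous_intros)
    then show ?thesis
      by (simp add: algebra_simps)
  qed
  have means: "k\<^sup>2 * integral {y0..y1} (\<lambda>y. (m y)\<^sup>2)
      \<le> w * integral (cbox (x0, y0) (x1, y1)) (\<lambda>z. (partial2 u z)\<^sup>2)"
    unfolding m_def w_def by (rule poincare_slice_means[OF u x01 y01 k(1,3) mean])
  have "k\<^sup>2 * integral {y0..y1} P = integral {y0..y1} (\<lambda>y. k\<^sup>2 * P y)"
    by simp
  also have "\<dots> \<le> integral {y0..y1} (\<lambda>y. k\<^sup>2 / w * (m y)\<^sup>2 + Q y)"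
    by (rule integral_le) (use along_x \<open>w > 0\<close> in \<open>auto intro!: int continuous_intros cont\<close>)
  also have "\<dots> = k\<^sup>2 / w * integral {y0..y1} (\<lambda>y. (m y)\<^sup>2) + integral {y0..y1} Q"
    using \<open>w > 0\<close> by (subst integral_add) (auto intro!: int continuous_intros cont)
  also have "\<dots> \<le> integral (cbox (x0, y0) (x1, y1)) (\<lambda>z. (partial2 u z)\<^sup>2) + integral {y0..y1} Q"
    using means \<open>w > 0\<close> by (simp add: pos_divide_le_eq mult.commute)
  finally have "k\<^sup>2 * integral {y0..y1} P
      \<le> integral (cbox (x0, y0) (x1, y1)) (\<lambda>z. (partial2 u z)\<^sup>2) + integral {y0..y1} Q" .
  moreover have "integral {y0..y1} P = integral (cbox (x0, y0) (x1, y1)) (\<lambda>z. (u z)\<^sup>2)"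
    "integral {y0..y1} Q = integral (cbox (x0, y0) (x1, y1)) (\<lambda>z. (partial1 u z)\<^sup>2)"
    unfolding P_def Q_def
    by (simp_all add: integral_rectangle_iterated continuous_on_subset[OF continuous_on_power[OF cu]]
        continuous_on_subset[OF continuous_on_power[OF c1]])
  moreover have "integral (cbox (x0, y0) (x1, y1)) (grad_sq u)
      = integral (cbox (x0, y0) (x1, y1)) (\<lambda>z. (partial2 u z)\<^sup>2)
        + integral (cbox (x0, y0) (x1, y1)) (\<lambda>z. (partial1 u z)\<^sup>2)"
    unfolding grad_sq_eq_partials[abs_def]
    by (subst integral_add) (auto intro!: integrable_continuous continuous_intros
        continuous_on_subset[OF c1] continuous_on_subset[OF c2])
  ultimately show ?thesis
    by simp
qed

lemma integral_interval_uniform_split: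
  fixes F :: "real \<Rightarrow> real"
  assumes "d > 0" and "continuous_on UNIV F"
  shows "integral {a..a + real p * d} F = (\<Sum>i<p. integral {a + real i * d..a + real (Suc i) * d} F)"
proof (induction p)
  case (Suc p)
  have "integral {a..a + real p * d} F + integral {a + real p * d..a + real (Suc p) * d} F
        = integral {a..a + real (Suc p) * d} F"
    using assms
    by (intro Henstock_Kurzweil_Integration.integral_combine)
      (auto intro!: integrable_continuous_interval continuous_on_subset[OF assms(2)])
  with Suc show ?case
    by simp
qed simp

definition grid_cell :: "real \<Rightarrow> real \<Rightarrow> nat \<Rightarrow> nat \<Rightarrow> (real \<times> real) set" where
  "grid_cell w h i j = cbox (real i * w, real j * h) (real (Suc i) * w, real (Suc j) * h)"

lemma integral_grid_split:
  fixes F :: "real \<times> real \<Rightarrow> real"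
  assumes w: "w > 0" and h: "h > 0" and F: "continuous_on UNIV F"
  shows "integral (cbox (0, 0) (real p * w, real q * h)) F = (\<Sum>i<p. \<Sum>j<q. integral (grid_cell w h i j) F)"
proof -
  have slices: "continuous_on UNIV (\<lambda>y. integral {a..b} (\<lambda>x. F (x, y)))" for a b
    by (rule continuous_on_integral_slice[OF F])
  have "integral (cbox (0, 0) (real p * w, real q * h)) F =
        integral {0..real q * h} (\<lambda>y. integral {0..real p * w} (\<lambda>x. F (x, y)))"
    by (rule integral_rectangle_iterated) (rule continuous_on_subset[OF F], simp)
  also have "\<dots> = integral {0..real q * h} (\<lambda>y. \<Sum>i<p. integral {real i * w..real (Suc i) * w} (\<lambda>x. F (x, y)))"
  proof (rule integral_cong)
    fix y
    have "continuous_on UNIV (\<lambda>x. F (x, y))"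
      by (rule continuous_on_compose2[OF F]) (auto intro!: continuous_intros)
    from integral_interval_uniform_split[OF w this, of 0 p]
    show "integral {0..real p * w} (\<lambda>x. F (x, y)) =
        (\<Sum>i<p. integral {real i * w..real (Suc i) * w} (\<lambda>x. F (x, y)))"
      by simp
  qed
  also have "\<dots> = (\<Sum>i<p. integral {0..real q * h} (\<lambda>y. integral {real i * w..real (Suc i) * w} (\<lambda>x. F (x, y))))"
    by (rule integral_sum) (auto intro!: integrable_continuous_interval continuous_on_subset[OF slices])
  also have "\<dots> = (\<Sum>i<p. \<Sum>j<q. integral {real j * h..real (Suc j) * h}
      (\<lambda>y. integral {real i * w..real (Suc i) * w} (\<lambda>x. F (x, y))))"
    using integral_interval_uniform_split[OF h slices, of 0 q] by simp
  also have "\<dots> = (\<Sum>i<p. \<Sum>j<q. integral (grid_cell w h i j) F)"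
    unfolding grid_cell_def
    by (intro sum.cong refl integral_rectangle_iterated[symmetric] continuous_on_subset[OF F]) simp
  finally show ?thesis .
qed

lemma poincare_neumann_grid:
  assumes u: "C1_fun u" and w: "w > 0" and h: "h > 0"
    and k: "0 < k" "k * w < pi" "k * h < pi"
    and mean: "\<And>i j. i < p \<Longrightarrow> j < q \<Longrightarrow> integral (grid_cell w h i j) u = 0"
  shows "k\<^sup>2 * integral (cbox (0, 0) (real p * w, real q * h)) (\<lambda>z. (u z)\<^sup>2)
           \<le> integral (cbox (0, 0) (real p * w, real q * h)) (grad_sq u)"
proof -
  have cu: "continuous_on UNIV u"
    by (rule C1_fun_continuous[OF u])
  have "continuous_on UNIV (grad_sq u)"
    unfolding grad_sq_eq_partials[abs_def] using C1_funD(2,3)[OF u] by (intro continuous_intros)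
  moreover have "k\<^sup>2 * integral (grid_cell w h i j) (\<lambda>z. (u z)\<^sup>2) \<le> integral (grid_cell w h i j) (grad_sq u)"
    if "i < p" "j < q" for i j
    unfolding grid_cell_def
    by (rule poincare_neumann_rectangle[OF u])
      (use w h k mean[OF that] in \<open>auto simp: grid_cell_def algebra_simps\<close>)
  ultimately show ?thesis
    using cu by (auto simp: integral_grid_split[OF w h] sum_distrib_left continuous_intros intro!: sum_mono)
qed

section \<open>Finite-dimensional trial spaces\<close>

lemma linear_system_nontrivial_solution:
  fixes a :: "'e \<Rightarrow> 'i \<Rightarrow> real"
  assumes "finite E" "finite S" "card E < card S"
  shows "\<exists>c. (\<exists>i\<in>S. c i \<noteq> 0) \<and> (\<forall>e\<in>E. (\<Sum>i\<in>S. a e i * c i) = 0)"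
  using assms
proof (induction E arbitrary: S a rule: finite_induct)
  case empty
  then obtain i where "i \<in> S" by (metis card.empty card_gt_0_iff ex_in_conv)
  then show ?case by (intro exI[of _ "\<lambda>_. 1"]) auto
next
  case (insert e E S a)
  have cE: "card E < card S" using insert by simp
  show ?case
  proof (cases "\<forall>i\<in>S. a e i = 0")
    case True
    from insert.IH[OF insert.prems(1) cE, of a] obtain c where
      "\<exists>i\<in>S. c i \<noteq> 0" "\<forall>e\<in>E. (\<Sum>i\<in>S. a e i * c i) = 0" by blast
    then show ?thesis using True by (intro exI[of _ c]) auto
  next
    case False
    then obtain i0 where i0: "i0 \<in> S" "a e i0 \<noteq> 0" by blast
    \<comment> \<open>Gaussian elimination: solve equation \<open>e\<close> for \<open>c i0\<close> and substitute into the others\<close>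
    define S' where "S' = S - {i0}"
    have fS': "finite S'" using insert.prems(1) unfolding S'_def by simp
    have cS': "card E < card S'" unfolding S'_def using insert i0 by (simp add: card_Diff_singleton)
    define a' where "a' e' i = a e' i - a e' i0 * a e i / a e i0" for e' i
    from insert.IH[OF fS' cS', of a'] obtain c' where
      c'1: "\<exists>i\<in>S'. c' i \<noteq> 0" and c'2: "\<forall>e'\<in>E. (\<Sum>i\<in>S'. a' e' i * c' i) = 0" by blast
    define c where "c i = (if i = i0 then - (\<Sum>j\<in>S'. a e j * c' j) / a e i0 else c' i)" for i
    have split: "(\<Sum>i\<in>S. b i * c i) = b i0 * c i0 + (\<Sum>i\<in>S'. b i * c' i)" for b
    proof -
      have "(\<Sum>i\<in>S. b i * c i) = b i0 * c i0 + (\<Sum>i\<in>S'. b i * c i)"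
        unfolding S'_def using i0 insert.prems(1) by (simp add: sum.remove)
      also have "(\<Sum>i\<in>S'. b i * c i) = (\<Sum>i\<in>S'. b i * c' i)"
        by (rule sum.cong) (auto simp: c_def S'_def)
      finally show ?thesis .
    qed
    have "\<forall>e'\<in>insert e E. (\<Sum>i\<in>S. a e' i * c i) = 0"
    proof
      fix e' assume "e' \<in> insert e E"
      then consider "e' = e" | "e' \<in> E" by blast
      then show "(\<Sum>i\<in>S. a e' i * c i) = 0"
      proof cases
        case 1
        then show ?thesis unfolding split using i0 by (simp add: c_def)
      next
        case 2
        have "0 = (\<Sum>i\<in>S'. a' e' i * c' i)" using c'2 2 by simp
        also have "\<dots> = (\<Sum>i\<in>S'. a e' i * c' i) - a e' i0 / a e i0 * (\<Sum>i\<in>S'. a e i * c' i)"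
          unfolding a'_def by (simp add: sum_subtractf sum_distrib_left algebra_simps)
        finally have "(\<Sum>i\<in>S'. a e' i * c' i) = a e' i0 / a e i0 * (\<Sum>i\<in>S'. a e i * c' i)" by simp
        then show ?thesis unfolding split using i0 by (simp add: c_def field_simps)
      qed
    qed
    moreover have "\<exists>i\<in>S. c i \<noteq> 0"
      using c'1 unfolding S'_def c_def by auto
    ultimately show ?thesis by blast
  qed
qed

lemma square_linear_system_solvable:
  fixes M :: "nat \<Rightarrow> nat \<Rightarrow> real"
  assumes inj: "\<And>d. \<forall>i<n. (\<Sum>j<n. M i j * d j) = 0 \<Longrightarrow> \<forall>j<n. d j = 0"
  shows "\<exists>d. \<forall>i<n. (\<Sum>j<n. M i j * d j) = r i"
proof -
  define a where "a i j = (if j < n then M i j else - r i)" for i j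
  \<comment> \<open>\<open>n\<close> equations \<open>M d = t r\<close> in the \<open>n + 1\<close> unknowns \<open>d\<^sub>0, \<dots>, d\<^sub>n\<^sub>-\<^sub>1, t\<close>\<close>
  have "\<exists>c. (\<exists>j\<in>{..<Suc n}. c j \<noteq> 0) \<and> (\<forall>i\<in>{..<n}. (\<Sum>j\<in>{..<Suc n}. a i j * c j) = 0)"
    by (rule linear_system_nontrivial_solution) simp_all
  then obtain c where c1: "\<exists>j\<in>{..<Suc n}. c j \<noteq> 0"
    and c2: "\<forall>i\<in>{..<n}. (\<Sum>j\<in>{..<Suc n}. a i j * c j) = 0"
    by blast
  have Mc: "(\<Sum>j<n. M i j * c j) = r i * c n" if "i < n" for i
  proof -
    have "(\<Sum>j<Suc n. a i j * c j) = 0"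
      using c2 that by (metis lessThan_iff)
    then have "(\<Sum>j<n. a i j * c j) + a i n * c n = 0"
      by (simp only: sum.lessThan_Suc)
    moreover have "(\<Sum>j<n. a i j * c j) = (\<Sum>j<n. M i j * c j)"
      by (rule sum.cong) (auto simp: a_def)
    ultimately have "(\<Sum>j<n. M i j * c j) = - (a i n * c n)"
      by linarith
    also have "\<dots> = r i * c n"
      by (simp add: a_def)
    finally show ?thesis .
  qed
  have "c n \<noteq> 0"
  proof
    assume "c n = 0"
    with Mc have "\<forall>i<n. (\<Sum>j<n. M i j * c j) = 0"
      by simp
    then have "\<forall>j<n. c j = 0"
      by (rule inj)
    with \<open>c n = 0\<close> have "\<forall>j<Suc n. c j = 0"
      by (simp add: less_Suc_eq)
    with c1 show False
      by blast
  qed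
  have "\<forall>i<n. (\<Sum>j<n. M i j * (c j / c n)) = r i"
  proof (intro allI impI)
    fix i assume "i < n"
    have "(\<Sum>j<n. M i j * (c j / c n)) = (\<Sum>j<n. M i j * c j) / c n"
      by (simp add: sum_divide_distrib)
    with Mc[OF \<open>i < n\<close>] \<open>c n \<noteq> 0\<close> show "(\<Sum>j<n. M i j * (c j / c n)) = r i"
      by simp
  qed
  then show ?thesis
    by (rule exI[of _ "\<lambda>j. c j / c n"])
qed

lemma integral_square_pos:
  fixes u :: "'a::euclidean_space \<Rightarrow> real"
  assumes u: "continuous_on (cbox a b) u" and ne: "box a b \<noteq> {}"
    and x: "x \<in> cbox a b" and "u x \<noteq> 0"
  shows "integral (cbox a b) (\<lambda>z. (u z)\<^sup>2) > 0"
proof -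
  have c: "continuous_on (cbox a b) (\<lambda>z. (u z)\<^sup>2)"
    by (intro continuous_intros u)
  have I: "((\<lambda>z. (u z)\<^sup>2) has_integral integral (cbox a b) (\<lambda>z. (u z)\<^sup>2)) (cbox a b)"
    by (intro integrable_integral integrable_continuous c)
  have "integral (cbox a b) (\<lambda>z. (u z)\<^sup>2) \<noteq> 0"
  proof
    assume "integral (cbox a b) (\<lambda>z. (u z)\<^sup>2) = 0"
    with I have zero: "((\<lambda>z. (u z)\<^sup>2) has_integral 0) (cbox a b)"
      by simp
    have "(u x)\<^sup>2 = 0"
      by (rule has_integral_0_cbox_imp_0[OF c _ zero ne x]) simp
    with \<open>u x \<noteq> 0\<close> show False
      by simp
  qed
  moreover have "integral (cbox a b) (\<lambda>z. (u z)\<^sup>2) \<ge> 0"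
    by (rule has_integral_nonneg[OF I]) simp
  ultimately show ?thesis
    by simp
qed

lemma integral_lincomb_mult:
  fixes f :: "nat \<Rightarrow> 'a::euclidean_space \<Rightarrow> real"
  assumes f: "\<And>i. i < n \<Longrightarrow> continuous_on (cbox a b) (f i)"
  shows "integral (cbox a b) (\<lambda>x. (\<Sum>i<n. c i * f i x) * (\<Sum>j<n. d j * f j x))
           = (\<Sum>i<n. \<Sum>j<n. c i * d j * integral (cbox a b) (\<lambda>x. f i x * f j x))"
proof -
  have int: "(\<lambda>x. f i x * f j x) integrable_on cbox a b" if "i < n" "j < n" for i j
    by (intro integrable_continuous continuous_on_mult f that)
  have "integral (cbox a b) (\<lambda>x. (\<Sum>i<n. c i * f i x) * (\<Sum>j<n. d j * f j x))
      = integral (cbox a b) (\<lambda>x. \<Sum>i<n. \<Sum>j<n. c i * d j * (f i x * f j x))"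
    by (rule integral_cong) (simp add: sum_product algebra_simps)
  also have "\<dots> = (\<Sum>i<n. integral (cbox a b) (\<lambda>x. \<Sum>j<n. c i * d j * (f i x * f j x)))"
    by (rule integral_sum) (auto intro!: integrable_sum integrable_on_mult_right int)
  also have "\<dots> = (\<Sum>i<n. \<Sum>j<n. integral (cbox a b) (\<lambda>x. c i * d j * (f i x * f j x)))"
    by (intro sum.cong refl integral_sum) (auto intro!: integrable_on_mult_right int)
  also have "\<dots> = (\<Sum>i<n. \<Sum>j<n. c i * d j * integral (cbox a b) (\<lambda>x. f i x * f j x))"
    by simp
  finally show ?thesis .
qed

lemma lincomb_dual_family:
  fixes f :: "nat \<Rightarrow> 'a::euclidean_space \<Rightarrow> real"
  assumes f: "\<And>i. i < n \<Longrightarrow> continuous_on (cbox a b) (f i)" and ne: "box a b \<noteq> {}"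
    and indep: "\<And>c. \<forall>x\<in>cbox a b. (\<Sum>i<n. c i * f i x) = 0 \<Longrightarrow> \<forall>i<n. c i = 0"
  obtains D where "\<And>c l. l < n \<Longrightarrow>
    c l = integral (cbox a b) (\<lambda>x. (\<Sum>i<n. c i * f i x) * (\<Sum>j<n. D l j * f j x))"
proof -
  define u where "u c x = (\<Sum>i<n. c i * f i x)" for c x
  define G where "G i j = integral (cbox a b) (\<lambda>x. f i x * f j x)" for i j
  have cu: "continuous_on (cbox a b) (u c)" for c
    unfolding u_def by (auto intro!: continuous_on_sum continuous_on_mult_left f)
  have inner: "integral (cbox a b) (\<lambda>x. u c x * u d x) = (\<Sum>i<n. c i * (\<Sum>j<n. G i j * d j))" for c d
  proof -
    have "integral (cbox a b) (\<lambda>x. u c x * u d x) = (\<Sum>i<n. \<Sum>j<n. c i * d j * G i j)"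
      unfolding u_def G_def by (rule integral_lincomb_mult[OF f])
    then show ?thesis
      by (simp add: sum_distrib_left algebra_simps)
  qed
  \<comment> \<open>the Gram matrix \<open>G\<close> is injective, hence invertible\<close>
  have "\<forall>j<n. d j = 0" if "\<forall>i<n. (\<Sum>j<n. G i j * d j) = 0" for d
  proof -
    have "integral (cbox a b) (\<lambda>x. (u d x)\<^sup>2) = 0"
      using inner[of d d] that by (simp add: power2_eq_square)
    then have "\<forall>x\<in>cbox a b. u d x = 0"
      using integral_square_pos[OF cu ne] by (metis less_irrefl)
    then show ?thesis
      using indep unfolding u_def by blast
  qed
  then have "\<exists>d. \<forall>i<n. (\<Sum>j<n. G i j * d j) = (if i = l then 1 else 0)" for l
    by (rule square_linear_system_solvable)
  then have "\<forall>l. \<exists>d. \<forall>i<n. (\<Sum>j<n. G i j * d j) = (if i = l then 1 else 0)"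
    by blast
  then have "\<exists>D. \<forall>l. \<forall>i<n. (\<Sum>j<n. G i j * D l j) = (if i = l then 1 else 0)"
    by (rule choice)
  then obtain D where D: "\<And>l i. i < n \<Longrightarrow> (\<Sum>j<n. G i j * D l j) = (if i = l then 1 else 0)"
    by blast
  have "c l = integral (cbox a b) (\<lambda>x. u c x * u (D l) x)" if "l < n" for c l
    unfolding inner using that by (simp add: D if_distrib cong: if_cong)
  then show ?thesis
    using that unfolding u_def by blast
qed

lemma lincomb_coeffs_sq_le:
  fixes f :: "nat \<Rightarrow> 'a::euclidean_space \<Rightarrow> real"
  assumes f: "\<And>i. i < n \<Longrightarrow> continuous_on (cbox a b) (f i)" and ne: "box a b \<noteq> {}"
    and indep: "\<And>c. \<forall>x\<in>cbox a b. (\<Sum>i<n. c i * f i x) = 0 \<Longrightarrow> \<forall>i<n. c i = 0"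
  obtains H where "\<And>c. (\<Sum>i<n. (c i)\<^sup>2) \<le> H * integral (cbox a b) (\<lambda>x. (\<Sum>i<n. c i * f i x)\<^sup>2)"
proof -
  define u where "u c x = (\<Sum>i<n. c i * f i x)" for c x
  obtain D where D: "\<And>c l. l < n \<Longrightarrow> c l = integral (cbox a b) (\<lambda>x. u c x * u (D l) x)"
    using lincomb_dual_family[where f=f and n=n, OF f ne indep] unfolding u_def by blast
  have cu: "continuous_on (cbox a b) (u c)" for c
    unfolding u_def by (auto intro!: continuous_on_sum continuous_on_mult_left f)
  define H where "H = (\<Sum>l<n. integral (cbox a b) (\<lambda>x. (u (D l) x)\<^sup>2))"
  have "(\<Sum>l<n. (c l)\<^sup>2) \<le> H * integral (cbox a b) (\<lambda>x. (u c x)\<^sup>2)" for c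
  proof -
    have "(c l)\<^sup>2 \<le> integral (cbox a b) (\<lambda>x. (u c x)\<^sup>2) * integral (cbox a b) (\<lambda>x. (u (D l) x)\<^sup>2)"
      if "l < n" for l
      unfolding D[OF that, of c] by (rule Cauchy_Schwarz_integral[OF cu cu])
    then have "(\<Sum>l<n. (c l)\<^sup>2) \<le> (\<Sum>l<n. integral (cbox a b) (\<lambda>x. (u c x)\<^sup>2) *
        integral (cbox a b) (\<lambda>x. (u (D l) x)\<^sup>2))"
      by (intro sum_mono) simp
    then show ?thesis
      unfolding H_def by (simp add: sum_distrib_left mult.commute)
  qed
  then show ?thesis
    using that unfolding u_def by blast
qed

lemma integral_lincomb_sq_le:
  fixes g h :: "nat \<Rightarrow> 'a::euclidean_space \<Rightarrow> real"
  assumes g: "\<And>i. i < n \<Longrightarrow> continuous_on (cbox a b) (g i)"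
    and h: "\<And>i. i < n \<Longrightarrow> continuous_on (cbox a b) (h i)"
  shows "integral (cbox a b) (\<lambda>x. (\<Sum>i<n. c i * g i x)\<^sup>2 + (\<Sum>i<n. c i * h i x)\<^sup>2)
           \<le> (\<Sum>i<n. (c i)\<^sup>2) * (\<Sum>i<n. integral (cbox a b) (\<lambda>x. (g i x)\<^sup>2 + (h i x)\<^sup>2))"
proof -
  define V where "V = (\<Sum>i<n. (c i)\<^sup>2)"
  have int: "(\<lambda>x. (g i x)\<^sup>2 + (h i x)\<^sup>2) integrable_on cbox a b" if "i < n" for i
    by (intro integrable_continuous continuous_on_add continuous_on_power g h that)
  have "integral (cbox a b) (\<lambda>x. (\<Sum>i<n. c i * g i x)\<^sup>2 + (\<Sum>i<n. c i * h i x)\<^sup>2)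
      \<le> integral (cbox a b) (\<lambda>x. V * (\<Sum>i<n. (g i x)\<^sup>2 + (h i x)\<^sup>2))"
  proof (rule integral_le)
    show "(\<lambda>x. (\<Sum>i<n. c i * g i x)\<^sup>2 + (\<Sum>i<n. c i * h i x)\<^sup>2) integrable_on cbox a b"
      by (intro integrable_continuous continuous_on_add continuous_on_power continuous_on_sum
          continuous_on_mult_left g h) simp_all
    show "(\<lambda>x. V * (\<Sum>i<n. (g i x)\<^sup>2 + (h i x)\<^sup>2)) integrable_on cbox a b"
      by (intro integrable_on_mult_right integrable_sum int) simp_all
    fix x
    show "(\<Sum>i<n. c i * g i x)\<^sup>2 + (\<Sum>i<n. c i * h i x)\<^sup>2 \<le> V * (\<Sum>i<n. (g i x)\<^sup>2 + (h i x)\<^sup>2)"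
      using Cauchy_Schwarz_ineq_sum[of c "\<lambda>i. g i x" "{..<n}"]
        Cauchy_Schwarz_ineq_sum[of c "\<lambda>i. h i x" "{..<n}"]
      unfolding V_def by (simp add: sum.distrib distrib_left)
  qed
  also have "\<dots> = V * integral (cbox a b) (\<lambda>x. \<Sum>i<n. (g i x)\<^sup>2 + (h i x)\<^sup>2)"
    by simp
  also have "\<dots> = V * (\<Sum>i<n. integral (cbox a b) (\<lambda>x. (g i x)\<^sup>2 + (h i x)\<^sup>2))"
    by (subst integral_sum) (auto intro: int)
  finally show ?thesis
    unfolding V_def .
qed

lemma C1_fun_fst_power: "C1_fun (\<lambda>z. (fst z) ^ i)"
  unfolding C1_fun_def
proof (intro exI conjI allI)
  show "continuous_on UNIV (\<lambda>z. real i * (fst z) ^ (i - 1))" "continuous_on UNIV (\<lambda>z::real \<times> real. 0::real)"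
    by (intro continuous_intros)+
  fix x :: "real \<times> real"
  have "((\<lambda>z. (fst z) ^ i) has_derivative (\<lambda>h. real i * (fst x) ^ (i - 1) * fst h)) (at x)"
    by (auto intro!: derivative_eq_intros simp: algebra_simps)
  then show "((\<lambda>z. (fst z) ^ i) has_derivative (\<lambda>h. real i * (fst x) ^ (i - 1) * fst h + 0 * snd h)) (at x)"
    by simp
qed

lemma lincomb_powers_eq_0_on_interval:
  fixes c :: "nat \<Rightarrow> real"
  assumes "L > 0" and zero: "\<And>t. t \<in> {0..L} \<Longrightarrow> (\<Sum>j<n. c j * t ^ j) = 0" and "i < n"
  shows "c i = 0"
proof -
  define c' where "c' j = (if j < n then c j else 0)" for j
  have "(\<Sum>j\<le>n. c' j * t ^ j) = (\<Sum>j<n. c j * t ^ j)" for t :: real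
    by (simp add: c'_def lessThan_Suc_atMost[symmetric])
  then have "{0..L} \<subseteq> {t. (\<Sum>j\<le>n. c' j * t ^ j) = 0}"
    using zero by auto
  moreover have "infinite {0..L}"
    using \<open>L > 0\<close> by simp
  ultimately have "infinite {t. (\<Sum>j\<le>n. c' j * t ^ j) = 0}"
    using finite_subset by blast
  then have "c' i = 0"
    using polyfun_finite_roots \<open>i < n\<close> by fastforce
  with \<open>i < n\<close> show ?thesis
    by (simp add: c'_def)
qed

section \<open>Lower bound for the Robin eigenvalues and the counting estimate\<close>

lemma rect_cbox: "rect l1 l2 = cbox (0, 0) (l1, l2)"
  unfolding rect_def cbox_Pair_eq by (simp add: cbox_interval)

definition trial_family :: "real \<Rightarrow> real \<Rightarrow> nat \<Rightarrow> (nat \<Rightarrow> real \<times> real \<Rightarrow> real) \<Rightarrow> bool" where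
  "trial_family L1 L2 n f \<longleftrightarrow> (\<forall>i<n. C1_fun (f i)) \<and>
     (\<forall>c. (\<forall>x\<in>rect L1 L2. (\<Sum>i<n. c i * f i x) = 0) \<longrightarrow> (\<forall>i<n. c i = 0))"

definition rayleigh_quotients ::
    "real \<Rightarrow> real \<Rightarrow> real \<Rightarrow> nat \<Rightarrow> (nat \<Rightarrow> real \<times> real \<Rightarrow> real) \<Rightarrow> real set" where
  "rayleigh_quotients L1 L2 \<alpha> n f =
     {robin_form L1 L2 \<alpha> (\<lambda>x. \<Sum>i<n. c i * f i x) / l2sq L1 L2 (\<lambda>x. \<Sum>i<n. c i * f i x)
       | c. \<exists>x\<in>rect L1 L2. (\<Sum>i<n. c i * f i x) \<noteq> 0}"

lemma robin_eig_eq_Inf_Sup: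
  "robin_eig L1 L2 \<alpha> n = Inf {Sup (rayleigh_quotients L1 L2 \<alpha> n f) | f. trial_family L1 L2 n f}"
  unfolding robin_eig_def rayleigh_quotients_def trial_family_def ..

lemma trial_family_fst_powers:
  assumes "L1 > 0" and "L2 \<ge> 0"
  shows "trial_family L1 L2 n (\<lambda>i z. (fst z) ^ i)"
  unfolding trial_family_def
proof (intro conjI allI impI C1_fun_fst_power)
  fix c :: "nat \<Rightarrow> real" and i
  assume zero: "\<forall>x\<in>rect L1 L2. (\<Sum>i<n. c i * (fst x) ^ i) = 0" and "i < n"
  have "(\<Sum>j<n. c j * t ^ j) = 0" if "t \<in> {0..L1}" for t
    using zero[rule_format, of "(t, 0)"] that \<open>L2 \<ge> 0\<close> by (simp add: rect_def)
  then show "c i = 0"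
    by (rule lincomb_powers_eq_0_on_interval[OF \<open>L1 > 0\<close> _ \<open>i < n\<close>])
qed

lemma robin_form_ge_integral_grad_sq:
  assumes "C1_fun u" and "\<alpha> \<ge> 0"
  shows "integral (rect L1 L2) (grad_sq u) \<le> robin_form L1 L2 \<alpha> u"
proof -
  have cu: "continuous_on UNIV u"
    by (rule C1_fun_continuous[OF assms(1)])
  have "0 \<le> integral {0..L1} (\<lambda>t. (u (t, 0))\<^sup>2 + (u (t, L2))\<^sup>2)"
    "0 \<le> integral {0..L2} (\<lambda>t. (u (0, t))\<^sup>2 + (u (L1, t))\<^sup>2)"
    by (auto intro!: integral_nonneg integrable_continuous_interval continuous_intros
        continuous_on_compose2[OF cu])
  with \<open>\<alpha> \<ge> 0\<close> show ?thesis
    unfolding robin_form_def by simp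
qed

lemma robin_form_lincomb_le:
  fixes f :: "nat \<Rightarrow> real \<times> real \<Rightarrow> real"
  assumes f: "\<And>i. i < n \<Longrightarrow> C1_fun (f i)" and "\<alpha> \<ge> 0"
  shows "robin_form L1 L2 \<alpha> (\<lambda>x. \<Sum>i<n. c i * f i x)
           \<le> (\<Sum>i<n. (c i)\<^sup>2) * (\<Sum>i<n. robin_form L1 L2 \<alpha> (f i))"
proof -
  define V where "V = (\<Sum>i<n. (c i)\<^sup>2)"
  have cf: "continuous_on S (\<lambda>t. f i (t, y))" "continuous_on S (\<lambda>t. f i (x, t))" if "i < n" for i x y S
    by (rule continuous_on_compose2[OF C1_fun_continuous[OF f[OF that]]]; auto intro!: continuous_intros)+
  have cpartial: "continuous_on S (partial1 (f i))" "continuous_on S (partial2 (f i))" if "i < n" for i S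
    using C1_funD(2,3)[OF f[OF that]] by (meson continuous_on_subset subset_UNIV)+
  have "integral (rect L1 L2) (grad_sq (\<lambda>x. \<Sum>i<n. c i * f i x)) = integral (cbox (0, 0) (L1, L2))
      (\<lambda>z. (\<Sum>i<n. c i * partial1 (f i) z)\<^sup>2 + (\<Sum>i<n. c i * partial2 (f i) z)\<^sup>2)"
    unfolding rect_cbox
    by (intro integral_cong) (simp only: grad_sq_eq_partials partial1_lincomb[where f=f and n=n, OF f]
        partial2_lincomb[where f=f and n=n, OF f])
  also have "\<dots> \<le> V * (\<Sum>i<n. integral (cbox (0, 0) (L1, L2)) (\<lambda>z. (partial1 (f i) z)\<^sup>2 + (partial2 (f i) z)\<^sup>2))"
    unfolding V_def
    by (rule integral_lincomb_sq_le) (auto intro: cpartial)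
  also have "\<dots> = V * (\<Sum>i<n. integral (rect L1 L2) (grad_sq (f i)))"
    by (simp add: rect_cbox grad_sq_eq_partials[abs_def])
  finally have grad: "integral (rect L1 L2) (grad_sq (\<lambda>x. \<Sum>i<n. c i * f i x))
      \<le> V * (\<Sum>i<n. integral (rect L1 L2) (grad_sq (f i)))" .
  have bottom_top: "integral {0..L1} (\<lambda>t. (\<Sum>i<n. c i * f i (t, 0))\<^sup>2 + (\<Sum>i<n. c i * f i (t, L2))\<^sup>2)
      \<le> V * (\<Sum>i<n. integral {0..L1} (\<lambda>t. (f i (t, 0))\<^sup>2 + (f i (t, L2))\<^sup>2))"
    unfolding V_def cbox_interval[symmetric]
    by (rule integral_lincomb_sq_le) (auto intro: cf)
  have left_right: "integral {0..L2} (\<lambda>t. (\<Sum>i<n. c i * f i (0, t))\<^sup>2 + (\<Sum>i<n. c i * f i (L1, t))\<^sup>2)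
      \<le> V * (\<Sum>i<n. integral {0..L2} (\<lambda>t. (f i (0, t))\<^sup>2 + (f i (L1, t))\<^sup>2))"
    unfolding V_def cbox_interval[symmetric]
    by (rule integral_lincomb_sq_le) (auto intro: cf)
  have "robin_form L1 L2 \<alpha> (\<lambda>x. \<Sum>i<n. c i * f i x)
      \<le> V * (\<Sum>i<n. integral (rect L1 L2) (grad_sq (f i)))
        + \<alpha> * (V * (\<Sum>i<n. integral {0..L1} (\<lambda>t. (f i (t, 0))\<^sup>2 + (f i (t, L2))\<^sup>2))
          + V * (\<Sum>i<n. integral {0..L2} (\<lambda>t. (f i (0, t))\<^sup>2 + (f i (L1, t))\<^sup>2)))"
    unfolding robin_form_def
    using grad bottom_top left_right \<open>\<alpha> \<ge> 0\<close> by (intro add_mono mult_left_mono) auto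
  also have "\<dots> = V * (\<Sum>i<n. robin_form L1 L2 \<alpha> (f i))"
    unfolding robin_form_def by (simp add: sum.distrib sum_distrib_left algebra_simps)
  finally show ?thesis
    unfolding V_def .
qed

text \<open>Needed because Sup of a set of reals that is not bounded above is unspecified.\<close>

lemma bdd_above_rayleigh_quotients:
  assumes L: "L1 > 0" "L2 > 0" and "\<alpha> \<ge> 0" and f: "trial_family L1 L2 n f"
  shows "bdd_above (rayleigh_quotients L1 L2 \<alpha> n f)"
proof -
  have C1: "\<And>i. i < n \<Longrightarrow> C1_fun (f i)"
    and indep: "\<And>c. \<forall>x\<in>cbox (0, 0) (L1, L2). (\<Sum>i<n. c i * f i x) = 0 \<Longrightarrow> \<forall>i<n. c i = 0"
    using f unfolding trial_family_def rect_cbox by auto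
  have ne: "box (0, 0) (L1, L2) \<noteq> {}"
    using L by (auto simp: box_ne_empty inner_Pair_0 Basis_prod_def)
  have cf: "continuous_on (cbox (0, 0) (L1, L2)) (f i)" if "i < n" for i
    using C1_fun_continuous[OF C1[OF that]] by (meson continuous_on_subset subset_UNIV)
  obtain H where H: "\<And>c. (\<Sum>i<n. (c i)\<^sup>2) \<le> H * integral (cbox (0, 0) (L1, L2)) (\<lambda>x. (\<Sum>i<n. c i * f i x)\<^sup>2)"
    using lincomb_coeffs_sq_le[where f=f and n=n, OF cf ne indep] by blast
  define K where "K = (\<Sum>i<n. robin_form L1 L2 \<alpha> (f i))"
  show ?thesis
  proof (rule bdd_aboveI[where M="H * \<bar>K\<bar>"])
    fix r assume "r \<in> rayleigh_quotients L1 L2 \<alpha> n f"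
    then obtain c x where r: "r = robin_form L1 L2 \<alpha> (\<lambda>x. \<Sum>i<n. c i * f i x)
        / l2sq L1 L2 (\<lambda>x. \<Sum>i<n. c i * f i x)"
      and x: "x \<in> cbox (0, 0) (L1, L2)" and nz: "(\<Sum>i<n. c i * f i x) \<noteq> 0"
      unfolding rayleigh_quotients_def rect_cbox by blast
    let ?u = "\<lambda>x. \<Sum>i<n. c i * f i x"
    have D: "l2sq L1 L2 ?u > 0"
      unfolding l2sq_def rect_cbox
      by (rule integral_square_pos[where u="?u", OF _ ne x nz])
        (auto intro!: continuous_on_sum continuous_on_mult_left cf)
    have "robin_form L1 L2 \<alpha> ?u \<le> (\<Sum>i<n. (c i)\<^sup>2) * K"
      unfolding K_def by (rule robin_form_lincomb_le[where f=f and n=n, OF C1 \<open>\<alpha> \<ge> 0\<close>])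
    also have "\<dots> \<le> (\<Sum>i<n. (c i)\<^sup>2) * \<bar>K\<bar>"
      by (intro mult_left_mono) (auto intro: sum_nonneg)
    also have "\<dots> \<le> (H * l2sq L1 L2 ?u) * \<bar>K\<bar>"
      using H[of c] unfolding l2sq_def rect_cbox by (rule mult_right_mono) simp
    finally have "robin_form L1 L2 \<alpha> ?u \<le> H * \<bar>K\<bar> * l2sq L1 L2 ?u"
      by (simp only: mult_ac)
    with D show "r \<le> H * \<bar>K\<bar>"
      unfolding r by (simp add: pos_divide_le_eq)
  qed
qed

lemma robin_form_ge_poincare_grid:
  assumes u: "C1_fun u" and "\<alpha> \<ge> 0" and w: "w > 0" and h: "h > 0"
    and k: "0 < k" "k * w < pi" "k * h < pi"
    and mean: "\<And>i j. i < p \<Longrightarrow> j < q \<Longrightarrow> integral (grid_cell w h i j) u = 0"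
  shows "k\<^sup>2 * l2sq (real p * w) (real q * h) u \<le> robin_form (real p * w) (real q * h) \<alpha> u"
  using poincare_neumann_grid[where p=p and q=q, OF u w h k mean]
    robin_form_ge_integral_grad_sq[OF u \<open>\<alpha> \<ge> 0\<close>, of "real p * w" "real q * h"]
  unfolding l2sq_def rect_cbox by linarith

lemma lincomb_zero_cell_means:
  fixes f :: "nat \<Rightarrow> real \<times> real \<Rightarrow> real"
  assumes f: "\<And>l. l < n \<Longrightarrow> continuous_on UNIV (f l)" and "p * q < n"
  obtains c where "\<exists>l<n. c l \<noteq> 0"
    and "\<And>i j. i < p \<Longrightarrow> j < q \<Longrightarrow> integral (grid_cell w h i j) (\<lambda>z. \<Sum>l<n. c l * f l z) = 0"
proof -
  have "\<exists>c. (\<exists>l\<in>{..<n}. c l \<noteq> 0) \<and>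
      (\<forall>e\<in>{..<p} \<times> {..<q}. (\<Sum>l\<in>{..<n}. integral (grid_cell w h (fst e) (snd e)) (f l) * c l) = 0)"
    by (rule linear_system_nontrivial_solution) (use \<open>p * q < n\<close> in \<open>simp_all add: card_cartesian_product\<close>)
  then obtain c where c_nz: "\<exists>l<n. c l \<noteq> 0"
    and c_mean: "\<And>i j. i < p \<Longrightarrow> j < q \<Longrightarrow> (\<Sum>l<n. integral (grid_cell w h i j) (f l) * c l) = 0"
    by fastforce
  have "integral (grid_cell w h i j) (\<lambda>z. \<Sum>l<n. c l * f l z) = 0" if "i < p" "j < q" for i j
  proof -
    have "integral (grid_cell w h i j) (\<lambda>z. \<Sum>l<n. c l * f l z)
        = (\<Sum>l<n. integral (grid_cell w h i j) (\<lambda>z. c l * f l z))"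
      unfolding grid_cell_def
      by (rule integral_sum) (auto intro!: integrable_continuous continuous_on_mult_left
          continuous_on_subset[OF f])
    also have "\<dots> = 0"
      using c_mean[OF that] by (simp add: mult.commute)
    finally show ?thesis .
  qed
  with c_nz show ?thesis
    by (rule that)
qed

lemma rayleigh_quotient_ge_grid:
  assumes w: "w > 0" and h: "h > 0" and "p > 0" "q > 0" and k: "0 < k" "k * w < pi" "k * h < pi"
    and "\<alpha> \<ge> 0" and "p * q < n" and f: "trial_family (real p * w) (real q * h) n f"
  shows "\<exists>r\<in>rayleigh_quotients (real p * w) (real q * h) \<alpha> n f. k\<^sup>2 \<le> r"
proof -
  let ?R = "rect (real p * w) (real q * h)"
  have C1: "\<And>i. i < n \<Longrightarrow> C1_fun (f i)"
    and indep: "\<And>c. \<forall>x\<in>?R. (\<Sum>i<n. c i * f i x) = 0 \<Longrightarrow> \<forall>i<n. c i = 0"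
    using f unfolding trial_family_def by auto
  obtain c where c_nz: "\<exists>l<n. c l \<noteq> 0"
    and mean: "\<And>i j. i < p \<Longrightarrow> j < q \<Longrightarrow> integral (grid_cell w h i j) (\<lambda>z. \<Sum>l<n. c l * f l z) = 0"
    using lincomb_zero_cell_means[where f=f and n=n, OF C1_fun_continuous[OF C1] \<open>p * q < n\<close>] by blast
  define u where "u = (\<lambda>z. \<Sum>l<n. c l * f l z)"
  have u: "C1_fun u"
    unfolding u_def by (rule C1_fun_lincomb) (rule C1)
  have ineq: "k\<^sup>2 * l2sq (real p * w) (real q * h) u \<le> robin_form (real p * w) (real q * h) \<alpha> u"
    using mean unfolding u_def[symmetric] by (rule robin_form_ge_poincare_grid[OF u \<open>\<alpha> \<ge> 0\<close> w h k])
  have "\<exists>x\<in>?R. u x \<noteq> 0"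
    using indep c_nz unfolding u_def by blast
  then obtain x where x: "x \<in> ?R" "u x \<noteq> 0"
    by blast
  have "l2sq (real p * w) (real q * h) u > 0"
    using x unfolding l2sq_def rect_cbox
    by (intro integral_square_pos continuous_on_subset[OF C1_fun_continuous[OF u]])
      (use w h \<open>p > 0\<close> \<open>q > 0\<close> in \<open>auto simp: box_ne_empty inner_Pair_0 Basis_prod_def\<close>)
  with ineq have "k\<^sup>2 \<le> robin_form (real p * w) (real q * h) \<alpha> u / l2sq (real p * w) (real q * h) u"
    by (simp add: le_divide_eq)
  moreover have "robin_form (real p * w) (real q * h) \<alpha> u / l2sq (real p * w) (real q * h) u
      \<in> rayleigh_quotients (real p * w) (real q * h) \<alpha> n f"
    using x unfolding rayleigh_quotients_def u_def by blast
  ultimately show ?thesis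
    by blast
qed

lemma robin_eig_ge_grid:
  assumes w: "w > 0" and h: "h > 0" and "p > 0" "q > 0" and k: "0 < k" "k * w < pi" "k * h < pi"
    and "\<alpha> \<ge> 0" and "p * q < n"
  shows "k\<^sup>2 \<le> robin_eig (real p * w) (real q * h) \<alpha> n"
  unfolding robin_eig_eq_Inf_Sup
proof (rule cInf_greatest)
  have "trial_family (real p * w) (real q * h) n (\<lambda>i z. (fst z) ^ i)"
    using w h \<open>p > 0\<close> \<open>q > 0\<close> by (intro trial_family_fst_powers) auto
  then show "{Sup (rayleigh_quotients (real p * w) (real q * h) \<alpha> n f) | f.
      trial_family (real p * w) (real q * h) n f} \<noteq> {}"
    by blast
next
  fix s assume "s \<in> {Sup (rayleigh_quotients (real p * w) (real q * h) \<alpha> n f) | f.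
      trial_family (real p * w) (real q * h) n f}"
  then obtain f where s: "s = Sup (rayleigh_quotients (real p * w) (real q * h) \<alpha> n f)"
    and f: "trial_family (real p * w) (real q * h) n f"
    by blast
  obtain r where "r \<in> rayleigh_quotients (real p * w) (real q * h) \<alpha> n f" and "k\<^sup>2 \<le> r"
    using rayleigh_quotient_ge_grid[OF w h \<open>p > 0\<close> \<open>q > 0\<close> k \<open>\<alpha> \<ge> 0\<close> \<open>p * q < n\<close> f] by blast
  moreover have "bdd_above (rayleigh_quotients (real p * w) (real q * h) \<alpha> n f)"
    using w h \<open>p > 0\<close> \<open>q > 0\<close> \<open>\<alpha> \<ge> 0\<close> f by (intro bdd_above_rayleigh_quotients) auto
  ultimately show "k\<^sup>2 \<le> s"
    unfolding s by (rule cSup_upper2)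
qed

lemma less_robin_eig:
  assumes "L1 > 0" "L2 > 0" "\<alpha> \<ge> 0" "lam \<ge> 0"
    and p: "L1 * sqrt lam < real p * pi" and q: "L2 * sqrt lam < real q * pi" and "p * q < n"
  shows "lam < robin_eig L1 L2 \<alpha> n"
proof -
  define s where "s = sqrt lam"
  have "s \<ge> 0"
    using \<open>lam \<ge> 0\<close> by (simp add: s_def)
  have "0 \<le> L1 * s" "0 \<le> L2 * s"
    using \<open>L1 > 0\<close> \<open>L2 > 0\<close> \<open>s \<ge> 0\<close> by simp_all
  with p q have "0 < real p * pi" "0 < real q * pi"
    unfolding s_def by linarith+
  then have "p > 0" "q > 0"
    by (simp_all add: zero_less_mult_iff)
  define w where "w = L1 / real p"
  define h where "h = L2 / real q"
  have "w > 0" "h > 0"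
    using \<open>L1 > 0\<close> \<open>L2 > 0\<close> \<open>p > 0\<close> \<open>q > 0\<close> by (simp_all add: w_def h_def)
  have "s < pi / w" "s < pi / h"
    using p q \<open>p > 0\<close> \<open>q > 0\<close> \<open>L1 > 0\<close> \<open>L2 > 0\<close>
    by (simp_all add: s_def w_def h_def field_simps mult.commute)
  \<comment> \<open>\<open>k\<close> lies strictly between \<open>s\<close> and \<open>pi / max w h\<close>: the interval inequalities need \<open>k w < pi\<close>\<close>
  define m where "m = min (pi / w) (pi / h)"
  define k where "k = (s + m) / 2"
  have "s < m" "m \<le> pi / w" "m \<le> pi / h"
    using \<open>s < pi / w\<close> \<open>s < pi / h\<close> by (auto simp: m_def)
  have "s < k" "k < m"
    using \<open>s < m\<close> by (simp_all add: k_def)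
  then have "k < pi / w" "k < pi / h"
    using \<open>m \<le> pi / w\<close> \<open>m \<le> pi / h\<close> by simp_all
  from \<open>s < k\<close> \<open>k < pi / w\<close> \<open>k < pi / h\<close> have k: "0 < k" "k * w < pi" "k * h < pi"
    using \<open>s \<ge> 0\<close> \<open>w > 0\<close> \<open>h > 0\<close> by (simp_all add: less_divide_eq)
  have "lam = s\<^sup>2"
    using \<open>lam \<ge> 0\<close> by (simp add: s_def)
  also have "\<dots> < k\<^sup>2"
    using \<open>s < k\<close> \<open>s \<ge> 0\<close> by (intro power_strict_mono) auto
  also have "\<dots> \<le> robin_eig (real p * w) (real q * h) \<alpha> n"
    by (rule robin_eig_ge_grid[OF \<open>w > 0\<close> \<open>h > 0\<close> \<open>p > 0\<close> \<open>q > 0\<close> k \<open>\<alpha> \<ge> 0\<close> \<open>p * q < n\<close>])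
  also have "robin_eig (real p * w) (real q * h) \<alpha> n = robin_eig L1 L2 \<alpha> n"
    using \<open>p > 0\<close> \<open>q > 0\<close> by (simp add: w_def h_def)
  finally show ?thesis .
qed

lemma robin_counting_function_le:
  assumes "L1 > 0" "L2 > 0" "\<alpha> \<ge> 0" "lam \<ge> 0"
  shows "finite {k. k \<ge> 1 \<and> robin_eig L1 L2 \<alpha> k \<le> lam} \<and>
    real (card {k. k \<ge> 1 \<and> robin_eig L1 L2 \<alpha> k \<le> lam})
      \<le> (L1 * sqrt lam / pi + 1) * (L2 * sqrt lam / pi + 1)"
proof -
  define X where "X = L1 * sqrt lam / pi"
  define Y where "Y = L2 * sqrt lam / pi"
  have "X \<ge> 0" "Y \<ge> 0"
    using assms by (simp_all add: X_def Y_def)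
  define p where "p = nat \<lfloor>X\<rfloor> + 1"
  define q where "q = nat \<lfloor>Y\<rfloor> + 1"
  have p: "X < real p" "real p \<le> X + 1" and q: "Y < real q" "real q \<le> Y + 1"
    using \<open>X \<ge> 0\<close> \<open>Y \<ge> 0\<close> by (simp_all add: p_def q_def) linarith+
  have "L1 * sqrt lam < real p * pi" "L2 * sqrt lam < real q * pi"
    using p(1) q(1) by (simp_all add: X_def Y_def divide_less_eq)
  then have "lam < robin_eig L1 L2 \<alpha> n" if "p * q < n" for n
    using less_robin_eig assms that by blast
  then have sub: "{k. k \<ge> 1 \<and> robin_eig L1 L2 \<alpha> k \<le> lam} \<subseteq> {1..p * q}"
    by (auto simp: not_less[symmetric])
  then have "finite {k. k \<ge> 1 \<and> robin_eig L1 L2 \<alpha> k \<le> lam}"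
    by (rule finite_subset) simp
  moreover have "card {k. k \<ge> 1 \<and> robin_eig L1 L2 \<alpha> k \<le> lam} \<le> p * q"
    using card_mono[OF _ sub] by simp
  then have "real (card {k. k \<ge> 1 \<and> robin_eig L1 L2 \<alpha> k \<le> lam}) \<le> real p * real q"
    by (metis of_nat_le_iff of_nat_mult)
  moreover have "real p * real q \<le> (X + 1) * (Y + 1)"
    using p q by (intro mult_mono) auto
  ultimately show ?thesis
    unfolding X_def Y_def by linarith
qed

theorem lemma6p3:
  fixes \<alpha> A a lam :: real
  assumes "\<alpha> > 0" and "A > 0" and "a \<ge> 1" and "lam > 0"
  shows "finite {k::nat. k \<ge> 1 \<and> robin_eig (sqrt A * a) (sqrt A / a) \<alpha> k \<le> lam} \<and>
         real (card {k::nat. k \<ge> 1 \<and> robin_eig (sqrt A * a) (sqrt A / a) \<alpha> k \<le> lam})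
           \<le> lam * A / pi\<^sup>2 + sqrt (lam * A) / pi * (a + 1 / a) + 1"
proof -
  have "a > 0"
    using \<open>a \<ge> 1\<close> by simp
  have "(sqrt A * a * sqrt lam / pi + 1) * (sqrt A / a * sqrt lam / pi + 1)
      = (sqrt A * sqrt A) * (sqrt lam * sqrt lam) / pi\<^sup>2 + sqrt A * sqrt lam / pi * (a + 1 / a) + 1"
    using \<open>a > 0\<close> by (simp add: field_simps power2_eq_square)
  also have "\<dots> = lam * A / pi\<^sup>2 + sqrt (lam * A) / pi * (a + 1 / a) + 1"
    using \<open>A > 0\<close> \<open>lam > 0\<close> by (simp add: real_sqrt_mult mult.commute)
  finally show ?thesis
    using robin_counting_function_le[of "sqrt A * a" "sqrt A / a" \<alpha> lam] assms \<open>a > 0\<close> by simp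
qed

end
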